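(* Let $U$ be a harmonic function on a domain $\Omega\subset\mathbb{R}^n$ with no critical points. Let $\alpha:(-\delta,\delta)\to\Omega$ be an integral curve of the vector field $\nabla U/\|\nabla U\|$. Then for every $s\in(-\delta,\delta)$, \[ \|\nabla U(\alpha(s))\|=\|\nabla U(\alpha(0))\|\exp\left((n-1)\int_0^s H(\alpha(\xi))\,d\xi\right), \] where for $p\in\Omega$, $H(p)$ is the mean curvature at $p$ of the level hypersurface $\{U=U(p)\}$ oriented by the unit normal field $\mathbf{N}=\nabla U/\|\nabla U\|$.
   Context: Mean curvature convention: for a hypersurface $M$ oriented by unit normal $\mathbf{N}$, $p\in M$ and a unit tangent vector $\mathbf{v}\in T_pM$, the normal section $M\cap\Pi_{\mathbf{v}}$ (where $\Pi_{\mathbf{v}}$ is the plane through $p$ spanned by $\mathbf{v}$ and $\mathbf{N}(p)$) has signed curvature $\kappa_p(\mathbf{v})=\langle c''(0),\mathbf{N}(p)\rangle$ for its unit-speed parametrization $c$ with $c(0)=p$, $c'(0)=\mathbf{v}$ (for a level set of $f$ with $\mathbf{N}=\nabla f/\|\nabla f\|$ this equals $-D^2_{\mathbf{v}}f(p)/\|\nabla f(p)\|$). $H(p)$ is the average of $\kappa_p(\mathbf{v})$ over the unit sphere of $T_pM$ (equivalently, $\frac{1}{n-1}$ times the sum of principal curvatures). The curve $\alpha$ has unit speed. *)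

theory Defs
  imports "HOL-Analysis.Analysis"
begin

definition grad :: "('a::euclidean_space \<Rightarrow> real) \<Rightarrow> 'a \<Rightarrow> 'a" where
  "grad U x = (\<Sum>b\<in>Basis. frechet_derivative U (at x) b *\<^sub>R b)"

definition second_dir_deriv :: "('a::euclidean_space \<Rightarrow> real) \<Rightarrow> 'a \<Rightarrow> 'a \<Rightarrow> real" where
  "second_dir_deriv U p v = frechet_derivative (grad U) (at p) v \<bullet> v"

definition laplacian :: "('a::euclidean_space \<Rightarrow> real) \<Rightarrow> 'a \<Rightarrow> real" where
  "laplacian U x = (\<Sum>b\<in>Basis. second_dir_deriv U x b)"

definition C2_on :: "'a::euclidean_space set \<Rightarrow> ('a \<Rightarrow> real) \<Rightarrow> bool" where
  "C2_on \<Omega> U \<longleftrightarrow>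
     (\<forall>x\<in>\<Omega>. U differentiable (at x)) \<and>
     (\<forall>x\<in>\<Omega>. grad U differentiable (at x)) \<and>
     (\<forall>u v. continuous_on \<Omega> (\<lambda>x. frechet_derivative (grad U) (at x) u \<bullet> v))"

definition harmonic_on :: "'a::euclidean_space set \<Rightarrow> ('a \<Rightarrow> real) \<Rightarrow> bool" where
  "harmonic_on \<Omega> U \<longleftrightarrow> open \<Omega> \<and> C2_on \<Omega> U \<and> (\<forall>x\<in>\<Omega>. laplacian U x = 0)"

definition level_tangent :: "('a::euclidean_space \<Rightarrow> real) \<Rightarrow> 'a \<Rightarrow> 'a set" where
  "level_tangent U p = {v. v \<bullet> grad U p = 0}"

text \<open>Normal curvature of the level set {U = U p}, oriented by N = grad U / |grad U|,
  in direction of the unit tangent vector v:  kappa_p(v) = - D^2_v U(p) / |grad U(p)|.\<close>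
definition normal_curvature :: "('a::euclidean_space \<Rightarrow> real) \<Rightarrow> 'a \<Rightarrow> 'a \<Rightarrow> real" where
  "normal_curvature U p v = - second_dir_deriv U p v / norm (grad U p)"

definition orthonormal_basis_of :: "'a::euclidean_space set \<Rightarrow> 'a set \<Rightarrow> bool" where
  "orthonormal_basis_of B T \<longleftrightarrow> finite B \<and> B \<subseteq> T \<and> span B = T \<and>
     (\<forall>b\<in>B. norm b = 1) \<and> pairwise orthogonal B"

text \<open>Mean curvature: 1/(n-1) times the sum of principal curvatures, i.e. the trace of the
  second fundamental form over an orthonormal basis of the tangent space.\<close>
definition mean_curvature :: "('a::euclidean_space \<Rightarrow> real) \<Rightarrow> 'a \<Rightarrow> real" where
  "mean_curvature U p =
     (let B = (SOME B. orthonormal_basis_of B (level_tangent U p))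
      in (\<Sum>e\<in>B. normal_curvature U p e) / (real DIM('a) - 1))"

end

theory Submission imports Defs begin

text \<open>For a harmonic function the trace of the Hessian vanishes. Computing this trace in an
  orthonormal basis made of the unit normal \<open>N = \<nabla>U/\<bar>\<nabla>U\<bar>\<close> and an orthonormal basis of the level
  tangent space gives \<open>(n-1) H = D\<^sup>2\<^sub>N U / \<bar>\<nabla>U\<bar>\<close>. On the other hand, along an integral curve of \<open>N\<close>
  the derivative of \<open>ln \<bar>\<nabla>U(\<alpha>(s))\<bar>\<close> is \<open>\<langle>D(\<nabla>U) N, N\<rangle> / \<bar>\<nabla>U\<bar> = D\<^sup>2\<^sub>N U / \<bar>\<nabla>U\<bar>\<close> as well, so integrating
  and exponentiating gives the formula.\<close>

definition unit_normal :: "('a::euclidean_space \<Rightarrow> real) \<Rightarrow> 'a \<Rightarrow> 'a" where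
  "unit_normal U x = grad U x /\<^sub>R norm (grad U x)"

lemma orthonormal_basis_expansion:
  fixes B :: "'a::euclidean_space set"
  assumes orth: "pairwise orthogonal B" and span: "span B = UNIV"
    and norm: "\<forall>b\<in>B. norm b = 1"
  shows "(\<Sum>b\<in>B. (x \<bullet> b) *\<^sub>R b) = x"
proof -
  have "b \<bullet> b = 1" if "b \<in> B" for b
    using norm that by (simp add: norm_eq_1)
  then have sum_eq: "(\<Sum>b\<in>B. (b \<bullet> x / (b \<bullet> b)) *\<^sub>R b) = (\<Sum>b\<in>B. (x \<bullet> b) *\<^sub>R b)"
    by (simp add: inner_commute)
  define y where "y = x - (\<Sum>b\<in>B. (x \<bullet> b) *\<^sub>R b)"
  have "orthogonal y y"
    using Gram_Schmidt_step[OF orth, of y x] span by (simp add: sum_eq y_def)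
  then show ?thesis
    by (simp add: y_def orthogonal_def)
qed

lemma sum_inner_orthonormal_basis_eq_Basis:
  fixes B :: "'a::euclidean_space set" and f :: "'a \<Rightarrow> 'a"
  assumes orth: "pairwise orthogonal B" and span: "span B = UNIV"
    and norm: "\<forall>b\<in>B. norm b = 1" and lin: "linear f"
  shows "(\<Sum>b\<in>B. f b \<bullet> b) = (\<Sum>c\<in>Basis. f c \<bullet> c)"
proof -
  have "(\<Sum>b\<in>B. f b \<bullet> b) = (\<Sum>b\<in>B. f (\<Sum>c\<in>Basis. (b \<bullet> c) *\<^sub>R c) \<bullet> b)"
    by (simp add: euclidean_representation)
  also have "\<dots> = (\<Sum>b\<in>B. \<Sum>c\<in>Basis. (b \<bullet> c) * (f c \<bullet> b))"
    by (simp add: linear_sum[OF lin] linear_scale[OF lin] inner_sum_left)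
  also have "\<dots> = (\<Sum>c\<in>Basis. \<Sum>b\<in>B. (b \<bullet> c) * (f c \<bullet> b))"
    by (rule sum.swap)
  also have "\<dots> = (\<Sum>c\<in>Basis. f c \<bullet> (\<Sum>b\<in>B. (c \<bullet> b) *\<^sub>R b))"
    by (simp add: inner_sum_right inner_commute mult.commute)
  also have "\<dots> = (\<Sum>c\<in>Basis. f c \<bullet> c)"
    by (simp add: orthonormal_basis_expansion[OF orth span norm])
  finally show ?thesis .
qed

lemma orthonormal_basis_of_level_tangent_exists:
  "\<exists>B. orthonormal_basis_of B (level_tangent U p)"
proof -
  have sub: "subspace (level_tangent U p)"
    by (simp add: level_tangent_def subspace_def inner_add_left)
  obtain B where "B \<subseteq> level_tangent U p" "pairwise orthogonal B"
    "\<And>x. x \<in> B \<Longrightarrow> norm x = 1" "span B = level_tangent U p"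
    using orthonormal_basis_subspace[OF sub] by metis
  then have "orthonormal_basis_of B (level_tangent U p)"
    by (simp add: orthonormal_basis_of_def pairwise_orthogonal_imp_finite)
  then show ?thesis ..
qed

lemma orthonormal_basis_insert_unit_normal:
  assumes B: "orthonormal_basis_of B (level_tangent U p)" and g: "grad U p \<noteq> 0"
  shows "unit_normal U p \<notin> B" "pairwise orthogonal (insert (unit_normal U p) B)"
    "span (insert (unit_normal U p) B) = UNIV" "\<forall>b\<in>insert (unit_normal U p) B. norm b = 1"
proof -
  let ?N = "unit_normal U p"
  have tangent_iff: "x \<in> level_tangent U p \<longleftrightarrow> orthogonal ?N x" for x
    using g by (simp add: level_tangent_def unit_normal_def orthogonal_def inner_commute)
  have "orthogonal ?N ?N \<Longrightarrow> False"
    using g by (simp add: unit_normal_def orthogonal_def)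
  with B show "?N \<notin> B"
    by (auto simp: orthonormal_basis_of_def tangent_iff)
  show "pairwise orthogonal (insert ?N B)"
    using B by (auto simp: orthonormal_basis_of_def pairwise_insert tangent_iff orthogonal_commute)
  show "\<forall>b\<in>insert ?N B. norm b = 1"
    using B g by (simp add: orthonormal_basis_of_def unit_normal_def)
  have "x \<in> span (insert ?N B)" for x
  proof -
    have "norm ?N = 1"
      using g by (simp add: unit_normal_def)
    then have "orthogonal ?N (x - (x \<bullet> ?N) *\<^sub>R ?N)"
      by (simp add: orthogonal_def inner_diff_right inner_commute norm_eq_1)
    then have "x - (x \<bullet> ?N) *\<^sub>R ?N \<in> span B"
      using B by (simp add: orthonormal_basis_of_def tangent_iff)
    then have "x - (x \<bullet> ?N) *\<^sub>R ?N + (x \<bullet> ?N) *\<^sub>R ?N \<in> span (insert ?N B)"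
      by (meson span_add span_base span_mono span_mul insertI1 subset_insertI subsetD)
    then show ?thesis
      by simp
  qed
  then show "span (insert ?N B) = UNIV"
    by auto
qed

text \<open>This is the classical identity \<open>(n-1) H = - div N\<close>.\<close>

lemma mean_curvature_conv_laplacian:
  fixes U :: "'a::euclidean_space \<Rightarrow> real"
  assumes dim: "DIM('a) \<ge> 2" and g: "grad U p \<noteq> 0" and diff: "grad U differentiable (at p)"
  shows "(real DIM('a) - 1) * mean_curvature U p =
     (second_dir_deriv U p (unit_normal U p) - laplacian U p) / norm (grad U p)"
proof -
  define B where "B = (SOME B. orthonormal_basis_of B (level_tangent U p))"
  have B: "orthonormal_basis_of B (level_tangent U p)"
    unfolding B_def by (rule someI_ex[OF orthonormal_basis_of_level_tangent_exists])
  then have "finite B"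
    by (simp add: orthonormal_basis_of_def)
  have lin: "linear (frechet_derivative (grad U) (at p))"
    using diff frechet_derivative_works has_derivative_linear by blast
  have "laplacian U p = (\<Sum>b\<in>insert (unit_normal U p) B. second_dir_deriv U p b)"
    unfolding laplacian_def second_dir_deriv_def
    using sum_inner_orthonormal_basis_eq_Basis[OF orthonormal_basis_insert_unit_normal(2-4)[OF B g] lin]
    by simp
  also have "\<dots> = second_dir_deriv U p (unit_normal U p) + (\<Sum>b\<in>B. second_dir_deriv U p b)"
    using \<open>finite B\<close> orthonormal_basis_insert_unit_normal(1)[OF B g] by simp
  finally have "(\<Sum>b\<in>B. normal_curvature U p b) =
      (second_dir_deriv U p (unit_normal U p) - laplacian U p) / norm (grad U p)"
    by (simp add: normal_curvature_def sum_negf flip: sum_divide_distrib)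
  then show ?thesis
    using dim by (simp add: mean_curvature_def B_def)
qed

lemma mean_curvature_harmonic:
  fixes U :: "'a::euclidean_space \<Rightarrow> real"
  assumes "DIM('a) \<ge> 2" "harmonic_on \<Omega> U" "x \<in> \<Omega>" "grad U x \<noteq> 0"
  shows "(real DIM('a) - 1) * mean_curvature U x =
     second_dir_deriv U x (unit_normal U x) / norm (grad U x)"
  using assms mean_curvature_conv_laplacian[of U x] by (simp add: harmonic_on_def C2_on_def)

lemma continuous_on_second_dir_deriv:
  assumes C2: "C2_on \<Omega> U" and v: "continuous_on \<Omega> v"
  shows "continuous_on \<Omega> (\<lambda>x. second_dir_deriv U x (v x))"
proof -
  let ?D = "\<lambda>x. frechet_derivative (grad U) (at x)"
  have expand: "second_dir_deriv U x (v x) =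
      (\<Sum>b\<in>Basis. \<Sum>c\<in>Basis. (v x \<bullet> b) * (v x \<bullet> c) * (?D x b \<bullet> c))" if "x \<in> \<Omega>" for x
  proof -
    have "grad U differentiable (at x)"
      using C2 that by (simp add: C2_on_def)
    then have lin: "linear (?D x)"
      using frechet_derivative_works has_derivative_linear by blast
    have "second_dir_deriv U x (v x) =
        ?D x (\<Sum>b\<in>Basis. (v x \<bullet> b) *\<^sub>R b) \<bullet> (\<Sum>c\<in>Basis. (v x \<bullet> c) *\<^sub>R c)"
      by (simp add: second_dir_deriv_def euclidean_representation)
    also have "\<dots> = (\<Sum>b\<in>Basis. \<Sum>c\<in>Basis. (v x \<bullet> b) * (v x \<bullet> c) * (?D x b \<bullet> c))"
      by (simp add: linear_sum[OF lin] linear_scale[OF lin] inner_sum_left inner_sum_right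
          sum_distrib_left mult.assoc) (subst sum.swap, simp add: mult.left_commute)
    finally show ?thesis .
  qed
  have D_cont: "continuous_on \<Omega> (\<lambda>x. ?D x b \<bullet> c)" for b c
    using C2 by (simp add: C2_on_def)
  have "continuous_on \<Omega> (\<lambda>x. \<Sum>b\<in>Basis. \<Sum>c\<in>Basis. (v x \<bullet> b) * (v x \<bullet> c) * (?D x b \<bullet> c))"
    by (intro continuous_on_sum continuous_on_mult D_cont continuous_on_inner v continuous_on_const)
  then show ?thesis
    by (rule continuous_on_eq) (simp add: expand)
qed

lemma continuous_on_harmonic_mean_curvature:
  fixes U :: "'a::euclidean_space \<Rightarrow> real"
  assumes dim: "DIM('a) \<ge> 2" and harm: "harmonic_on \<Omega> U" and nocrit: "\<forall>x\<in>\<Omega>. grad U x \<noteq> 0"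
  shows "continuous_on \<Omega> (mean_curvature U)"
proof -
  have C2: "C2_on \<Omega> U"
    using harm by (simp add: harmonic_on_def)
  have "continuous_on \<Omega> (grad U)"
    using C2 by (simp add: C2_on_def continuous_at_imp_continuous_on differentiable_imp_continuous_within)
  then have "continuous_on \<Omega> (\<lambda>x. second_dir_deriv U x (unit_normal U x) / norm (grad U x) / (real DIM('a) - 1))"
    unfolding unit_normal_def using nocrit dim
    by (intro continuous_intros continuous_on_second_dir_deriv[OF C2]) auto
  moreover have "second_dir_deriv U x (unit_normal U x) / norm (grad U x) / (real DIM('a) - 1) =
      mean_curvature U x" if "x \<in> \<Omega>" for x
    using mean_curvature_harmonic[OF dim harm that] nocrit that dim by (simp add: field_simps)
  ultimately show ?thesis
    by (rule continuous_on_eq)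
qed

lemma has_real_derivative_ln_norm_grad:
  assumes \<alpha>: "(\<alpha> has_vector_derivative v) (at t)" and diff: "grad U differentiable (at (\<alpha> t))"
    and g: "grad U (\<alpha> t) \<noteq> 0"
  shows "((\<lambda>t. ln (norm (grad U (\<alpha> t)))) has_real_derivative
      frechet_derivative (grad U) (at (\<alpha> t)) v \<bullet> unit_normal U (\<alpha> t) / norm (grad U (\<alpha> t))) (at t)"
proof -
  let ?D = "frechet_derivative (grad U) (at (\<alpha> t))"
  have "(grad U has_derivative ?D) (at (\<alpha> t))"
    using diff frechet_derivative_works by blast
  then have "(grad U \<circ> \<alpha> has_vector_derivative ?D v) (at t)"
    using vector_derivative_diff_chain_within[OF \<alpha>] has_derivative_at_withinI by blast
  moreover have "(norm has_derivative (\<lambda>h. h \<bullet> unit_normal U (\<alpha> t))) (at ((grad U \<circ> \<alpha>) t))"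
    using has_derivative_norm[OF g] by (simp add: unit_normal_def sgn_div_norm)
  ultimately have "(norm \<circ> (grad U \<circ> \<alpha>) has_vector_derivative ?D v \<bullet> unit_normal U (\<alpha> t)) (at t)"
    using vector_derivative_diff_chain_within has_derivative_at_withinI by blast
  then have "((\<lambda>t. norm (grad U (\<alpha> t))) has_real_derivative ?D v \<bullet> unit_normal U (\<alpha> t)) (at t)"
    by (simp add: has_real_derivative_iff_has_vector_derivative o_def)
  then have "((\<lambda>t. ln (norm (grad U (\<alpha> t)))) has_real_derivative
      inverse (norm (grad U (\<alpha> t))) * (?D v \<bullet> unit_normal U (\<alpha> t))) (at t)"
    using g by (intro DERIV_chain2[OF DERIV_ln]) auto
  then show ?thesis
    by (simp add: divide_inverse_commute)
qed

lemma has_real_derivative_ln_norm_grad_harmonic: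
  fixes U :: "'a::euclidean_space \<Rightarrow> real"
  assumes "DIM('a) \<ge> 2" "harmonic_on \<Omega> U" "\<alpha> t \<in> \<Omega>" "grad U (\<alpha> t) \<noteq> 0"
    and "(\<alpha> has_vector_derivative unit_normal U (\<alpha> t)) (at t)"
  shows "((\<lambda>t. ln (norm (grad U (\<alpha> t)))) has_real_derivative
      (real DIM('a) - 1) * mean_curvature U (\<alpha> t)) (at t)"
proof -
  have "grad U differentiable (at (\<alpha> t))"
    using assms(2,3) by (simp add: harmonic_on_def C2_on_def)
  from has_real_derivative_ln_norm_grad[OF assms(5) this assms(4)] show ?thesis
    using mean_curvature_harmonic[OF assms(1-4)] by (simp add: second_dir_deriv_def)
qed

lemma interval_integral_FTC_is_interval:
  fixes f F :: "real \<Rightarrow> real"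
  assumes J: "is_interval J" and ab: "a \<in> J" "b \<in> J"
    and F: "\<And>t. t \<in> J \<Longrightarrow> (F has_real_derivative f t) (at t)" and f: "continuous_on J f"
  shows "(LBINT t=a..b. f t) = F b - F a"
proof (rule interval_integral_FTC_finite)
  have min_in: "min a b \<in> J" and max_in: "max a b \<in> J"
    using ab by (simp_all add: min_def max_def)
  have sub: "{min a b..max a b} \<subseteq> J"
  proof
    fix t assume "t \<in> {min a b..max a b}"
    then show "t \<in> J"
      by (intro mem_is_interval_1_I[OF J min_in max_in]) simp_all
  qed
  show "continuous_on {min a b..max a b} f"
    using f sub by (rule continuous_on_subset)
  fix t assume "min a b \<le> t" "t \<le> max a b"
  with sub have "t \<in> J"
    by auto
  then show "(F has_vector_derivative f t) (at t within {min a b..max a b})"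
    using F has_field_derivative_at_within has_real_derivative_iff_has_vector_derivative by blast
qed

theorem theorem2:
  fixes U :: "'a::euclidean_space \<Rightarrow> real"
    and \<Omega> :: "'a set"
    and \<alpha> :: "real \<Rightarrow> 'a"
    and \<delta> :: real
  assumes dim: "DIM('a) \<ge> 2"
    and dom: "open \<Omega>" "connected \<Omega>"
    and harm: "harmonic_on \<Omega> U"
    and nocrit: "\<forall>x\<in>\<Omega>. grad U x \<noteq> 0"
    and delta: "\<delta> > 0"
    and curve: "\<forall>s\<in>{-\<delta><..<\<delta>}. \<alpha> s \<in> \<Omega> \<and>
        (\<alpha> has_vector_derivative (grad U (\<alpha> s) /\<^sub>R norm (grad U (\<alpha> s)))) (at s)"
  shows "\<forall>s\<in>{-\<delta><..<\<delta>}.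
     norm (grad U (\<alpha> s)) =
       norm (grad U (\<alpha> 0)) *
       exp ((real DIM('a) - 1) * (LBINT \<xi>=0..s. mean_curvature U (\<alpha> \<xi>)))"
proof
  fix s assume s: "s \<in> {-\<delta><..<\<delta>}"
  let ?J = "{-\<delta><..<\<delta>}" and ?m = "real DIM('a) - 1"
  have "continuous_on ?J \<alpha>"
    using curve by (intro continuous_at_imp_continuous_on ballI) (meson has_vector_derivative_continuous)
  then have "continuous_on ?J (\<lambda>t. mean_curvature U (\<alpha> t))"
    using continuous_on_compose2[OF continuous_on_harmonic_mean_curvature[OF dim harm nocrit]] curve
    by blast
  moreover have "((\<lambda>t. ln (norm (grad U (\<alpha> t)))) has_real_derivative ?m * mean_curvature U (\<alpha> t)) (at t)"
    if "t \<in> ?J" for t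
    using has_real_derivative_ln_norm_grad_harmonic[OF dim harm] curve nocrit that
    by (simp add: unit_normal_def)
  ultimately have "(LBINT \<xi>=ereal 0..ereal s. ?m * mean_curvature U (\<alpha> \<xi>)) =
      ln (norm (grad U (\<alpha> s))) - ln (norm (grad U (\<alpha> 0)))"
    using s delta
    by (intro interval_integral_FTC_is_interval[OF is_interval_oo] continuous_on_mult_left) auto
  then have "?m * (LBINT \<xi>=0..s. mean_curvature U (\<alpha> \<xi>)) =
      ln (norm (grad U (\<alpha> s))) - ln (norm (grad U (\<alpha> 0)))"
    by (simp add: zero_ereal_def)
  moreover have "norm (grad U (\<alpha> s)) > 0" "norm (grad U (\<alpha> 0)) > 0"
    using curve nocrit s delta by auto
  ultimately show "norm (grad U (\<alpha> s)) =
      norm (grad U (\<alpha> 0)) * exp (?m * (LBINT \<xi>=0..s. mean_curvature U (\<alpha> \<xi>)))"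
    by (simp add: exp_diff)
qed

end
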